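(* Let $X$ be a real Banach space with a normalized boundedly complete basis $\mathcal B=(e_n)_{n=1}^\infty$ with biorthogonal functionals $(e_n^* )$, and let $\mathcal E=(\varepsilon_n)_{n=1}^\infty$ be a sequence of nonnegative numbers. If the brick $K_{\mathcal B,\mathcal E}$ is norm-bounded, then it contains an extreme point.
   Context: The brick is $K_{\mathcal B,\mathcal E}=\{x\in X:\ |e_n^*(x)|\le\varepsilon_n \text{ for all } n\}$. A basis is boundedly complete if for every scalar sequence $(a_n)$, $\sup_n\|\sum_{k=1}^na_ke_k\|<\infty$ implies convergence of $\sum_n a_ne_n$. A point $x_0\in A$ is an extreme point of $A$ if for every nonzero $x\in X$ there is $\lambda\in[-1,1]$ with $x_0+\lambda x\notin A$. *)

theory Defs
  imports "HOL-Analysis.Analysis"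
begin

text \<open>A Schauder basis (indexed from 0): every vector has a unique norm-convergent expansion.\<close>
definition schauder_basis :: "(nat \<Rightarrow> 'a::real_normed_vector) \<Rightarrow> bool" where
  "schauder_basis e \<longleftrightarrow> (\<forall>x. \<exists>!a. (\<lambda>n. a n *\<^sub>R e n) sums x)"

definition biorthogonal_functionals ::
  "(nat \<Rightarrow> 'a::real_normed_vector) \<Rightarrow> (nat \<Rightarrow> 'a \<Rightarrow> real) \<Rightarrow> bool" where
  "biorthogonal_functionals e estar \<longleftrightarrow> (\<forall>x. (\<lambda>n. estar n x *\<^sub>R e n) sums x)"

definition normalized_basis :: "(nat \<Rightarrow> 'a::real_normed_vector) \<Rightarrow> bool" where
  "normalized_basis e \<longleftrightarrow> (\<forall>n. norm (e n) = 1)"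

definition boundedly_complete :: "(nat \<Rightarrow> 'a::real_normed_vector) \<Rightarrow> bool" where
  "boundedly_complete e \<longleftrightarrow>
     (\<forall>a::nat \<Rightarrow> real. bounded (range (\<lambda>n. \<Sum>k<n. a k *\<^sub>R e k))
        \<longrightarrow> summable (\<lambda>n. a n *\<^sub>R e n))"

definition brick :: "(nat \<Rightarrow> 'a \<Rightarrow> real) \<Rightarrow> (nat \<Rightarrow> real) \<Rightarrow> 'a set" where
  "brick estar eps = {x. \<forall>n. \<bar>estar n x\<bar> \<le> eps n}"

definition is_extreme_point :: "'a::real_vector \<Rightarrow> 'a set \<Rightarrow> bool" where
  "is_extreme_point x0 A \<longleftrightarrow> x0 \<in> A \<and>
     (\<forall>x. x \<noteq> 0 \<longrightarrow> (\<exists>t\<in>{-1..1::real}. x0 + t *\<^sub>R x \<notin> A))"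

end

theory Submission
  imports Defs
begin

text \<open>Since the brick is bounded, the partial sums \<open>\<Sum>k<N. \<epsilon>\<^sub>k e\<^sub>k\<close>, which lie in it, are bounded;
  bounded completeness makes \<open>\<Sum>\<^sub>n \<epsilon>\<^sub>n e\<^sub>n\<close> converge to a vector \<open>x\<^sub>0\<close> with \<open>e\<^sub>n\<^sup>*(x\<^sub>0) = \<epsilon>\<^sub>n\<close> for all \<open>n\<close>.
  This corner of the brick is extreme: a nonzero \<open>x\<close> has some coordinate \<open>e\<^sub>n\<^sup>*(x) \<noteq> 0\<close>, and moving
  from \<open>x\<^sub>0\<close> by \<open>\<pm>x\<close> with the sign of that coordinate pushes \<open>e\<^sub>n\<^sup>*\<close> beyond \<open>\<epsilon>\<^sub>n\<close>.\<close>

lemma coeff_eq_of_sums: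
  assumes "schauder_basis e" and "biorthogonal_functionals e estar"
    and "(\<lambda>n. a n *\<^sub>R e n) sums x"
  shows "estar n x = a n"
proof -
  have "(\<lambda>n. estar n x *\<^sub>R e n) sums x"
    using assms(2) unfolding biorthogonal_functionals_def by blast
  with assms(1,3) have "(\<lambda>n. estar n x) = a"
    unfolding schauder_basis_def by metis
  then show ?thesis by metis
qed

lemma coeff_sum_lessThan:
  assumes "schauder_basis e" and "biorthogonal_functionals e estar"
  shows "estar n (\<Sum>k<N. a k *\<^sub>R e k) = (if n < N then a n else 0)"
proof -
  let ?b = "\<lambda>k. if k < N then a k else 0"
  have "(\<lambda>k. ?b k *\<^sub>R e k) sums (\<Sum>k<N. ?b k *\<^sub>R e k)"
    by (rule sums_finite) auto
  then have "(\<lambda>k. ?b k *\<^sub>R e k) sums (\<Sum>k<N. a k *\<^sub>R e k)"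
    by simp
  then show ?thesis
    by (rule coeff_eq_of_sums[OF assms])
qed

lemma coeff_add_scaleR:
  assumes "schauder_basis e" and "biorthogonal_functionals e estar"
  shows "estar n (x + t *\<^sub>R y) = estar n x + t * estar n y"
proof -
  have "(\<lambda>k. estar k z *\<^sub>R e k) sums z" for z
    using assms(2) unfolding biorthogonal_functionals_def by blast
  from sums_add[OF this[of x] sums_scaleR_right[OF this[of y], of t]]
  have "(\<lambda>k. (estar k x + t * estar k y) *\<^sub>R e k) sums (x + t *\<^sub>R y)"
    by (simp add: algebra_simps)
  then show ?thesis
    by (rule coeff_eq_of_sums[OF assms])
qed

lemma exists_coeff_nonzero:
  assumes "biorthogonal_functionals e estar" and "x \<noteq> 0"
  shows "\<exists>n. estar n x \<noteq> 0"
proof (rule ccontr)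
  assume "\<nexists>n. estar n x \<noteq> 0"
  then have "(\<lambda>n. estar n x *\<^sub>R e n) sums 0"
    by simp
  moreover have "(\<lambda>n. estar n x *\<^sub>R e n) sums x"
    using assms(1) unfolding biorthogonal_functionals_def by blast
  ultimately show False
    using assms(2) sums_unique2 by blast
qed

lemma brick_corner_is_extreme_point:
  assumes "schauder_basis e" and "biorthogonal_functionals e estar"
    and "\<forall>n. eps n \<ge> 0" and corner: "\<forall>n. estar n x0 = eps n"
  shows "is_extreme_point x0 (brick estar eps)"
  unfolding is_extreme_point_def
proof (intro conjI allI impI)
  show "x0 \<in> brick estar eps"
    using assms(3) corner unfolding brick_def by simp
next
  fix x :: 'a
  assume "x \<noteq> 0"
  then obtain n where n: "estar n x \<noteq> 0"
    using exists_coeff_nonzero[OF assms(2)] by blast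
  define t where "t = sgn (estar n x)"
  have t: "t \<in> {-1..1}" "t * estar n x > 0"
    using n by (auto simp: t_def sgn_real_def)
  have "estar n (x0 + t *\<^sub>R x) = eps n + t * estar n x"
    using coeff_add_scaleR[OF assms(1,2)] corner by simp
  with t have "\<not> \<bar>estar n (x0 + t *\<^sub>R x)\<bar> \<le> eps n"
    by linarith
  then have "x0 + t *\<^sub>R x \<notin> brick estar eps"
    unfolding brick_def by blast
  with t show "\<exists>t\<in>{-1..1::real}. x0 + t *\<^sub>R x \<notin> brick estar eps"
    by blast
qed

lemma bounded_brick_has_corner:
  assumes "schauder_basis e" and "biorthogonal_functionals e estar"
    and "boundedly_complete e" and "\<forall>n. eps n \<ge> 0"
    and "bounded (brick estar eps)"
  obtains x0 where "\<forall>n. estar n x0 = eps n"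
proof -
  have "(\<Sum>k<N. eps k *\<^sub>R e k) \<in> brick estar eps" for N
    using coeff_sum_lessThan[OF assms(1,2)] assms(4) unfolding brick_def by simp
  with assms(5) have "bounded (range (\<lambda>N. \<Sum>k<N. eps k *\<^sub>R e k))"
    by (meson bounded_subset image_subset_iff)
  with assms(3) obtain x0 where "(\<lambda>n. eps n *\<^sub>R e n) sums x0"
    unfolding boundedly_complete_def summable_def by blast
  then show ?thesis
    using that coeff_eq_of_sums[OF assms(1,2)] by blast
qed

theorem proposition2p10:
  fixes e :: "nat \<Rightarrow> 'a::banach"
    and estar :: "nat \<Rightarrow> 'a \<Rightarrow> real"
    and eps :: "nat \<Rightarrow> real"
  assumes "schauder_basis e"
    and "biorthogonal_functionals e estar"
    and "normalized_basis e"
    and "boundedly_complete e"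
    and "\<forall>n. eps n \<ge> 0"
    and "bounded (brick estar eps)"
  shows "\<exists>x0. is_extreme_point x0 (brick estar eps)"
proof -
  obtain x0 where "\<forall>n. estar n x0 = eps n"
    using bounded_brick_has_corner[OF assms(1,2,4,5,6)] by blast
  then show ?thesis
    using brick_corner_is_extreme_point[OF assms(1,2,5)] by blast
qed

end
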